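(* Let $L$ be a finite distributive lattice and $K=[\hat0_K,\hat1_K]$ a cutting of $L$. Then $$R(L\boxplus K,x)=\begin{cases}R(L,x)+x^{h_L(\hat0_K)+1}R(K,x), & \text{if }\hat1_K=\hat1_L;\\ R(K,x)+x\,R(L,x), &\text{if }\hat0_K=\hat0_L.\end{cases}$$
   Context: For a finite poset $P$, $\mathcal{F}(P)$ is the set of filters (up-sets) of $P$ ordered by reverse inclusion; every finite distributive lattice $L$ is isomorphic to some $\mathcal{F}(P)$; $\hat0_L,\hat1_L$ denote the least and greatest elements of $L$. A cutting of $L$ is an interval $K=[\hat0_K,\hat1_K]$ of $L$ such that every maximal chain of $L$ meets $K$. For a cutting $K$ of $L=\mathcal{F}(P)$, let $S=\hat0_K\setminus\hat1_K$, $S_0$ the set of maximal elements of $P\setminus\hat0_K$, $S_1$ the set of minimal elements of $\hat1_K$. The poset $P_K$ is $P\cup\{x_K\}$ ($x_K$ new) where the order on $P$ is unchanged, $z<x_K$ iff $z\le s$ for some $s\in S_0$, $x_K<y$ iff $y\ge s$ for some $s\in S_1$, and $x_K$ is incomparable to every element of $S$. The convex expansion is $L\boxplus K:=\mathcal{F}(P_K)$. For a finite distributive lattice $M$ and $a\in M$, $h_M(a)$ is the height of $a$ in $M$, and $R(M,x)=\sum_{a\in M}x^{h_M(a)}$ is the rank generating function. *)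

theory Defs
  imports "HOL-Computational_Algebra.Polynomial"
begin

definition chain_on :: "'b set \<Rightarrow> ('b \<Rightarrow> 'b \<Rightarrow> bool) \<Rightarrow> 'b set \<Rightarrow> bool" where
  "chain_on M le C \<longleftrightarrow> C \<subseteq> M \<and> (\<forall>u\<in>C. \<forall>v\<in>C. le u v \<or> le v u)"

definition maximal_chain :: "'b set \<Rightarrow> ('b \<Rightarrow> 'b \<Rightarrow> bool) \<Rightarrow> 'b set \<Rightarrow> bool" where
  "maximal_chain M le C \<longleftrightarrow> chain_on M le C \<and> (\<forall>D. chain_on M le D \<and> C \<subseteq> D \<longrightarrow> D = C)"

definition height :: "'b set \<Rightarrow> ('b \<Rightarrow> 'b \<Rightarrow> bool) \<Rightarrow> 'b \<Rightarrow> nat" where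
  "height M le a = Max ((\<lambda>C. card C - 1) ` {C. chain_on {b \<in> M. le b a} le C})"

definition rank_gen :: "'b set \<Rightarrow> ('b \<Rightarrow> 'b \<Rightarrow> bool) \<Rightarrow> int poly" where
  "rank_gen M le = (\<Sum>a\<in>M. monom 1 (height M le a))"

definition finite_poset :: "'a set \<Rightarrow> ('a \<Rightarrow> 'a \<Rightarrow> bool) \<Rightarrow> bool" where
  "finite_poset P le \<longleftrightarrow> finite P \<and> (\<forall>x\<in>P. le x x)
     \<and> (\<forall>x\<in>P. \<forall>y\<in>P. le x y \<and> le y x \<longrightarrow> x = y)
     \<and> (\<forall>x\<in>P. \<forall>y\<in>P. \<forall>z\<in>P. le x y \<and> le y z \<longrightarrow> le x z)"

definition filters :: "'a set \<Rightarrow> ('a \<Rightarrow> 'a \<Rightarrow> bool) \<Rightarrow> 'a set set" where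
  "filters P le = {F. F \<subseteq> P \<and> (\<forall>x\<in>F. \<forall>y\<in>P. le x y \<longrightarrow> y \<in> F)}"

(* F(P) is ordered by reverse inclusion *)
definition rev_incl :: "'a set \<Rightarrow> 'a set \<Rightarrow> bool" where
  "rev_incl A B \<longleftrightarrow> B \<subseteq> A"

definition interval :: "'a set \<Rightarrow> ('a \<Rightarrow> 'a \<Rightarrow> bool) \<Rightarrow> 'a set \<Rightarrow> 'a set \<Rightarrow> 'a set set" where
  "interval P le a b = {c \<in> filters P le. rev_incl a c \<and> rev_incl c b}"

definition is_cutting :: "'a set \<Rightarrow> ('a \<Rightarrow> 'a \<Rightarrow> bool) \<Rightarrow> 'a set \<Rightarrow> 'a set \<Rightarrow> bool" where
  "is_cutting P le a b \<longleftrightarrow> a \<in> filters P le \<and> b \<in> filters P le \<and> rev_incl a b \<and>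
     (\<forall>C. maximal_chain (filters P le) rev_incl C \<longrightarrow> C \<inter> interval P le a b \<noteq> {})"

definition S0 :: "'a set \<Rightarrow> ('a \<Rightarrow> 'a \<Rightarrow> bool) \<Rightarrow> 'a set \<Rightarrow> 'a set" where
  "S0 P le a = {s \<in> P - a. \<forall>t\<in>P - a. le s t \<longrightarrow> t = s}"

definition S1 :: "'a set \<Rightarrow> ('a \<Rightarrow> 'a \<Rightarrow> bool) \<Rightarrow> 'a set \<Rightarrow> 'a set" where
  "S1 P le b = {s \<in> b. \<forall>t\<in>b. le t s \<longrightarrow> t = s}"

(* P_K: carrier Some ` P plus new element None = x_K *)
definition PK :: "'a set \<Rightarrow> 'a option set" where
  "PK P = insert None (Some ` P)"

definition leK :: "'a set \<Rightarrow> ('a \<Rightarrow> 'a \<Rightarrow> bool) \<Rightarrow> 'a set \<Rightarrow> 'a set \<Rightarrow> 'a option \<Rightarrow> 'a option \<Rightarrow> bool" where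
  "leK P le a b u v = (case (u, v) of
      (Some z, Some y) \<Rightarrow> le z y
    | (Some z, None) \<Rightarrow> z \<notin> a - b \<and> (\<exists>s\<in>S0 P le a. le z s)
    | (None, Some y) \<Rightarrow> y \<notin> a - b \<and> (\<exists>s\<in>S1 P le b. le s y)
    | (None, None) \<Rightarrow> True)"

(* convex expansion L \<boxplus> K = F(P_K), ordered by reverse inclusion *)
definition convex_expansion :: "'a set \<Rightarrow> ('a \<Rightarrow> 'a \<Rightarrow> bool) \<Rightarrow> 'a set \<Rightarrow> 'a set \<Rightarrow> 'a option set set" where
  "convex_expansion P le a b = filters (PK P) (leK P le a b)"

end

theory Submission
  imports Defs
begin

(* In the lattice of filters of a finite poset, ordered by reverse inclusion, a filter G has
   height |A - G| in every interval [A, B] containing it: a chain of filters between G and A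
   strictly shrinks at each step, and starting from A and removing, one at a time, elements
   of A - G that are minimal for a strictly increasing rank stays within filters, so the
   bound is attained.
   The filters of P_K are the sets G and G + x_K for filters G of P.  If 1_K = 1_L, i.e.
   b = {}, then x_K lies above exactly the elements outside a and below nothing, so the
   filters with x_K are all filters of P, with unchanged height, and those without x_K are
   the filters G \<subseteq> a of K, with height |P - a| + 1 + |a - G|.  Dually, if 0_K = 0_L,
   i.e. a = P, the filters without x_K are all of L raised by one and those with x_K are
   the filters of K. *)

(* The relation leK defining P_K need not be transitive, so heights of filters are computed
   for any relation admitting a strictly increasing rank. *)
definition strict_rank :: "'b set \<Rightarrow> ('b \<Rightarrow> 'b \<Rightarrow> bool) \<Rightarrow> ('b \<Rightarrow> nat) \<Rightarrow> bool" where
  "strict_rank Q R f \<longleftrightarrow> (\<forall>x\<in>Q. \<forall>y\<in>Q. R x y \<and> x \<noteq> y \<longrightarrow> f x < f y)"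

lemma finite_filters: "finite P \<Longrightarrow> finite (filters P le)"
  by (rule finite_subset[of _ "Pow P"]) (auto simp: filters_def)

lemma card_Diff_nested:
  assumes "finite P" and "G \<subseteq> a" and "a \<subseteq> P"
  shows "card (P - G) = card (P - a) + card (a - G)"
proof -
  have "P - G = (P - a) \<union> (a - G)" "(P - a) \<inter> (a - G) = {}" using assms(2,3) by auto
  moreover have "finite a" using assms(1,3) by (rule finite_subset[rotated])
  ultimately show ?thesis using \<open>finite P\<close> by (simp add: card_Un_disjoint)
qed

lemma card_chain_between_le:
  assumes "finite A" and between: "\<forall>c\<in>C. G \<subseteq> c \<and> c \<subseteq> A"
    and chain: "\<forall>u\<in>C. \<forall>v\<in>C. u \<subseteq> v \<or> v \<subseteq> u"
  shows "card C \<le> card (A - G) + 1"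
proof -
  have "inj_on (\<lambda>c. card (c - G)) C"
  proof (rule inj_onI)
    fix u v assume u: "u \<in> C" and v: "v \<in> C" and eq: "card (u - G) = card (v - G)"
    have "finite (u - G)" "finite (v - G)"
      using u v between \<open>finite A\<close> by (meson Diff_subset finite_subset subset_trans)+
    with eq chain u v have "u - G = v - G"
      by (metis Diff_mono card_subset_eq order_refl)
    then show "u = v" using u v between by blast
  qed
  moreover have "card (c - G) \<le> card (A - G)" if "c \<in> C" for c
    using between that \<open>finite A\<close> by (meson Diff_mono card_mono finite_Diff order_refl)
  then have "(\<lambda>c. card (c - G)) ` C \<subseteq> {0..card (A - G)}" by auto
  ultimately have "card C \<le> card {0..card (A - G)}"
    by (rule card_inj_on_le) simp
  then show ?thesis by simp
qed

lemma filter_remove_minimal: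
  assumes rank: "strict_rank Q R f" and c: "c \<in> filters Q R" and G: "G \<in> filters Q R"
    and x: "x \<in> c - G" and min: "\<forall>y\<in>c - G. \<not> f y < f x"
  shows "c - {x} \<in> filters Q R"
  unfolding filters_def
proof (intro CollectI conjI ballI impI)
  show "c - {x} \<subseteq> Q" using c by (auto simp: filters_def)
  fix y w assume y: "y \<in> c - {x}" and w: "w \<in> Q" and "R y w"
  then have "w \<in> c" using c by (auto simp: filters_def)
  moreover have "w \<noteq> x"
  proof
    assume "w = x"
    then have "y \<notin> G" using G x w \<open>R y w\<close> by (auto simp: filters_def)
    then have "\<not> f y < f x" using min y by blast
    moreover have "f y < f x"
      using rank y c w \<open>w = x\<close> \<open>R y w\<close> by (auto simp: strict_rank_def filters_def)
    ultimately show False by contradiction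
  qed
  ultimately show "w \<in> c - {x}" by blast
qed

lemma ex_chain_of_filters:
  assumes "finite Q" and rank: "strict_rank Q R f" and G: "G \<in> filters Q R"
    and "c \<in> filters Q R" and "G \<subseteq> c"
  shows "\<exists>C. chain_on {d \<in> filters Q R. G \<subseteq> d \<and> d \<subseteq> c} rev_incl C \<and> card C = card (c - G) + 1"
  using assms(4,5)
proof (induction "card (c - G)" arbitrary: c)
  case 0
  have "finite c" using \<open>finite Q\<close> \<open>c \<in> filters Q R\<close> by (auto simp: filters_def intro: finite_subset)
  then have "c = G" using 0 by auto
  then show ?case
    using "0.prems" by (intro exI[of _ "{c}"]) (auto simp: chain_on_def rev_incl_def)
next
  case (Suc n)
  have "finite (c - G)" "c - G \<noteq> {}"
    using Suc.hyps(2) by (metis card.infinite nat.distinct(1), metis card.empty nat.distinct(1))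
  then obtain x where x: "x \<in> c - G" and min: "\<forall>y\<in>c - G. \<not> f y < f x"
    using ex_is_arg_min_if_finite[of "c - G" f] by (auto simp: is_arg_min_def)
  have "c - {x} \<in> filters Q R"
    using filter_remove_minimal[OF rank Suc.prems(1) G x min] .
  moreover have "card (c - {x} - G) = n"
  proof -
    have "c - {x} - G = (c - G) - {x}" by blast
    then show ?thesis using Suc.hyps(2) x \<open>finite (c - G)\<close> by (simp add: card_Diff_singleton)
  qed
  ultimately obtain C where C: "chain_on {d \<in> filters Q R. G \<subseteq> d \<and> d \<subseteq> c - {x}} rev_incl C"
    and "card C = n + 1"
    using Suc.hyps(1) Suc.prems(2) x by blast
  have "c \<notin> C" using C x by (auto simp: chain_on_def)
  moreover have "finite C" using \<open>card C = n + 1\<close> card.infinite by fastforce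
  ultimately have "card (insert c C) = card (c - G) + 1"
    using \<open>card C = n + 1\<close> Suc.hyps(2) by simp
  moreover have "chain_on {d \<in> filters Q R. G \<subseteq> d \<and> d \<subseteq> c} rev_incl (insert c C)"
    using C Suc.prems by (auto simp: chain_on_def rev_incl_def)
  ultimately show ?case by blast
qed

lemma height_filter_interval:
  assumes "finite Q" and rank: "strict_rank Q R f" and A: "A \<in> filters Q R"
    and G: "G \<in> filters Q R" and "B \<subseteq> G" and "G \<subseteq> A"
  shows "height {c \<in> filters Q R. B \<subseteq> c \<and> c \<subseteq> A} rev_incl G = card (A - G)"
proof -
  define M where "M = {c \<in> filters Q R. B \<subseteq> c \<and> c \<subseteq> A}"
  define chains where "chains = {C. chain_on {c \<in> M. rev_incl c G} rev_incl C}"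
  have "finite A" using \<open>finite Q\<close> A finite_subset by (auto simp: filters_def)
  have bounded: "card C - 1 \<le> card (A - G)" if "C \<in> chains" for C
  proof -
    have "C \<subseteq> M" "\<forall>c\<in>C. G \<subseteq> c" and chain: "\<forall>u\<in>C. \<forall>v\<in>C. u \<subseteq> v \<or> v \<subseteq> u"
      using that unfolding chains_def chain_on_def rev_incl_def by blast+
    then have "\<forall>c\<in>C. G \<subseteq> c \<and> c \<subseteq> A" by (auto simp: M_def)
    with card_chain_between_le[OF \<open>finite A\<close> this chain] show ?thesis by simp
  qed
  obtain C where "chain_on {d \<in> filters Q R. G \<subseteq> d \<and> d \<subseteq> A} rev_incl C"
    and "card C = card (A - G) + 1"
    using ex_chain_of_filters[OF \<open>finite Q\<close> rank G A \<open>G \<subseteq> A\<close>] by blast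
  then have "C \<in> chains" "card C - 1 = card (A - G)"
    using \<open>B \<subseteq> G\<close> by (auto simp: chains_def chain_on_def M_def rev_incl_def)
  moreover have "chains \<subseteq> Pow (Pow Q)"
    by (auto simp: chains_def chain_on_def M_def filters_def)
  then have "finite chains"
    using \<open>finite Q\<close> by (meson finite_Pow_iff finite_subset)
  ultimately have "Max ((\<lambda>C. card C - 1) ` chains) = card (A - G)"
    using bounded by (intro Max_eqI) (auto intro!: image_eqI[of _ _ C])
  then show ?thesis by (simp add: height_def chains_def M_def)
qed

lemma height_filters:
  assumes "finite Q" and "strict_rank Q R f" and "G \<in> filters Q R"
  shows "height (filters Q R) rev_incl G = card (Q - G)"
proof -
  have "filters Q R = {c \<in> filters Q R. {} \<subseteq> c \<and> c \<subseteq> Q}" by (auto simp: filters_def)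
  moreover have "Q \<in> filters Q R" and "G \<subseteq> Q" using assms(3) by (auto simp: filters_def)
  ultimately show ?thesis
    using height_filter_interval[OF assms(1,2) _ assms(3), of Q "{}"] by simp
qed

lemma finite_posetD:
  assumes "finite_poset P le"
  shows "finite P"
    and "x \<in> P \<Longrightarrow> le x x"
    and "x \<in> P \<Longrightarrow> y \<in> P \<Longrightarrow> le x y \<Longrightarrow> le y x \<Longrightarrow> x = y"
    and "x \<in> P \<Longrightarrow> y \<in> P \<Longrightarrow> z \<in> P \<Longrightarrow> le x y \<Longrightarrow> le y z \<Longrightarrow> le x z"
  using assms unfolding finite_poset_def by blast+

lemma finite_poset_converse: "finite_poset P le \<Longrightarrow> finite_poset P (\<lambda>x y. le y x)"
  unfolding finite_poset_def by blast

definition down_card :: "'a set \<Rightarrow> ('a \<Rightarrow> 'a \<Rightarrow> bool) \<Rightarrow> 'a \<Rightarrow> nat" where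
  "down_card P le z = card {w \<in> P. le w z}"

lemma down_card_le_card: "finite P \<Longrightarrow> down_card P le z \<le> card P"
  unfolding down_card_def by (rule card_mono) auto

lemma strict_rank_down_card:
  assumes po: "finite_poset P le"
  shows "strict_rank P le (down_card P le)"
  unfolding strict_rank_def
proof (intro ballI impI)
  fix x y assume "x \<in> P" "y \<in> P" and "le x y \<and> x \<noteq> y"
  then have "{w \<in> P. le w x} \<subset> {w \<in> P. le w y}"
    using finite_posetD(2-4)[OF po] by blast
  then show "down_card P le x < down_card P le y"
    unfolding down_card_def by (rule psubset_card_mono[rotated]) (simp add: finite_posetD(1)[OF po])
qed

lemma finite_poset_ex_minimal_below:
  assumes po: "finite_poset P le" and "X \<subseteq> P" and "z \<in> X"
  shows "\<exists>s\<in>X. le s z \<and> (\<forall>t\<in>X. le t s \<longrightarrow> t = s)"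
proof -
  define D where "D = {s \<in> X. le s z}"
  have "finite D"
    using \<open>X \<subseteq> P\<close> by (intro finite_subset[OF _ finite_posetD(1)[OF po]]) (auto simp: D_def)
  moreover have "z \<in> D" using finite_posetD(2)[OF po] \<open>X \<subseteq> P\<close> \<open>z \<in> X\<close> by (auto simp: D_def)
  ultimately obtain s where s: "s \<in> D" and min: "\<forall>t\<in>D. \<not> down_card P le t < down_card P le s"
    using ex_is_arg_min_if_finite[of D "down_card P le"] by (auto simp: is_arg_min_def)
  have "t = s" if "t \<in> X" "le t s" for t
  proof (rule ccontr)
    assume "t \<noteq> s"
    have "s \<in> X" "le s z" using s by (simp_all add: D_def)
    then have "t \<in> D"
      using finite_posetD(4)[OF po] that \<open>X \<subseteq> P\<close> \<open>z \<in> X\<close> unfolding D_def by blast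
    moreover have "down_card P le t < down_card P le s"
      using strict_rank_down_card[OF po] that \<open>t \<noteq> s\<close> \<open>s \<in> X\<close> \<open>X \<subseteq> P\<close>
      unfolding strict_rank_def by blast
    ultimately show False using min by blast
  qed
  then show ?thesis using s by (auto simp: D_def)
qed

lemma finite_poset_ex_maximal_above:
  assumes "finite_poset P le" and "X \<subseteq> P" and "z \<in> X"
  shows "\<exists>s\<in>X. le z s \<and> (\<forall>t\<in>X. le s t \<longrightarrow> t = s)"
  using finite_poset_ex_minimal_below[OF finite_poset_converse[OF assms(1)] assms(2,3)] .

lemma interval_eq: "interval P le a b = {c \<in> filters P le. b \<subseteq> c \<and> c \<subseteq> a}"
  by (auto simp: interval_def rev_incl_def)

lemma rank_gen_filters:
  assumes "finite_poset P le"
  shows "rank_gen (filters P le) rev_incl = (\<Sum>G\<in>filters P le. monom 1 (card (P - G)))"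
  unfolding rank_gen_def
  using height_filters[OF finite_posetD(1)[OF assms] strict_rank_down_card[OF assms]]
  by (intro sum.cong) auto

lemma rank_gen_interval:
  assumes "finite_poset P le" and "a \<in> filters P le"
  shows "rank_gen (interval P le a b) rev_incl = (\<Sum>G\<in>interval P le a b. monom 1 (card (a - G)))"
  unfolding rank_gen_def
proof (intro sum.cong refl)
  fix G assume "G \<in> interval P le a b"
  then have "G \<in> filters P le" "b \<subseteq> G" "G \<subseteq> a" by (auto simp: interval_eq)
  then show "monom 1 (height (interval P le a b) rev_incl G) = monom 1 (card (a - G))"
    using height_filter_interval[OF finite_posetD(1)[OF assms(1)] strict_rank_down_card[OF assms(1)] assms(2)]
    by (simp add: interval_eq)
qed

lemma filters_PK:
  assumes agree: "\<And>x y. R (Some x) (Some y) = le x y"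
  shows "filters (PK P) R =
      (\<lambda>G. Some ` G) ` {G \<in> filters P le. \<forall>z\<in>G. \<not> R (Some z) None}
    \<union> (\<lambda>G. insert None (Some ` G)) ` {G \<in> filters P le. \<forall>y\<in>P. R None (Some y) \<longrightarrow> y \<in> G}"
    (is "_ = ?X \<union> ?Y")
proof (intro equalityI subsetI)
  fix F assume F: "F \<in> filters (PK P) R"
  define G where "G = Some -` F"
  have FP: "F \<subseteq> PK P" and up: "\<And>x y. x \<in> F \<Longrightarrow> y \<in> PK P \<Longrightarrow> R x y \<Longrightarrow> y \<in> F"
    using F by (auto simp: filters_def)
  have "G \<subseteq> P" using FP by (auto simp: G_def PK_def)
  then have G: "G \<in> filters P le"
    using up agree by (auto simp: filters_def G_def PK_def)
  show "F \<in> ?X \<union> ?Y"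
  proof (cases "None \<in> F")
    case True
    then have "F = insert None (Some ` G)"
      using FP by (auto simp: G_def PK_def)
    moreover have "\<forall>y\<in>P. R None (Some y) \<longrightarrow> y \<in> G"
      using up[OF True] by (auto simp: G_def PK_def)
    ultimately show ?thesis using G by blast
  next
    case False
    then have "F = Some ` G"
      using FP by (auto simp: G_def PK_def)
    moreover have "\<forall>z\<in>G. \<not> R (Some z) None"
      using up False by (auto simp: G_def PK_def)
    ultimately show ?thesis using G by blast
  qed
next
  fix F assume "F \<in> ?X \<union> ?Y"
  then show "F \<in> filters (PK P) R"
    using agree by (auto simp: filters_def PK_def)
qed

lemma rank_gen_filters_PK:
  assumes "finite P" and rank: "strict_rank (PK P) R f"
    and agree: "\<And>x y. R (Some x) (Some y) = le x y"
  shows "rank_gen (filters (PK P) R) rev_incl =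
      (\<Sum>G\<in>{G \<in> filters P le. \<forall>z\<in>G. \<not> R (Some z) None}. monom 1 (card (P - G) + 1))
    + (\<Sum>G\<in>{G \<in> filters P le. \<forall>y\<in>P. R None (Some y) \<longrightarrow> y \<in> G}. monom 1 (card (P - G)))"
proof -
  let ?X = "{G \<in> filters P le. \<forall>z\<in>G. \<not> R (Some z) None}"
  let ?Y = "{G \<in> filters P le. \<forall>y\<in>P. R None (Some y) \<longrightarrow> y \<in> G}"
  have "finite (PK P)" using \<open>finite P\<close> by (simp add: PK_def)
  have "finite (filters P le)"
    using \<open>finite P\<close> by (rule finite_filters)
  then have "finite ?X" "finite ?Y" by simp_all
  have inj_Some: "inj_on (\<lambda>G. Some ` G) ?X" and inj_None: "inj_on (\<lambda>G. insert None (Some ` G)) ?Y"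
    by (auto intro!: inj_on_inverseI[of _ "\<lambda>F. Some -` F"])
  have card_Some: "card (PK P - Some ` G) = card (P - G) + 1" if "G \<subseteq> P" for G
  proof -
    have "PK P - Some ` G = insert None (Some ` (P - G))" using that by (auto simp: PK_def)
    then show ?thesis using \<open>finite P\<close> by (simp add: card_image)
  qed
  have card_None: "card (PK P - insert None (Some ` G)) = card (P - G)" if "G \<subseteq> P" for G
  proof -
    have "PK P - insert None (Some ` G) = Some ` (P - G)" using that by (auto simp: PK_def)
    then show ?thesis by (simp add: card_image)
  qed
  have "rank_gen (filters (PK P) R) rev_incl = (\<Sum>F\<in>filters (PK P) R. monom 1 (card (PK P - F)))"
    unfolding rank_gen_def using height_filters[OF \<open>finite (PK P)\<close> rank] by simp
  also have "\<dots> = (\<Sum>F\<in>(\<lambda>G. Some ` G) ` ?X. monom 1 (card (PK P - F)))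
      + (\<Sum>F\<in>(\<lambda>G. insert None (Some ` G)) ` ?Y. monom 1 (card (PK P - F)))"
    unfolding filters_PK[of R le, OF agree] using \<open>finite ?X\<close> \<open>finite ?Y\<close>
    by (intro sum.union_disjoint) auto
  also have "(\<Sum>F\<in>(\<lambda>G. Some ` G) ` ?X. monom 1 (card (PK P - F))) = (\<Sum>G\<in>?X. monom 1 (card (P - G) + 1))"
    unfolding sum.reindex[OF inj_Some] by (rule sum.cong) (auto simp: card_Some filters_def)
  also have "(\<Sum>F\<in>(\<lambda>G. insert None (Some ` G)) ` ?Y. monom 1 (card (PK P - F))) = (\<Sum>G\<in>?Y. monom 1 (card (P - G)))"
    unfolding sum.reindex[OF inj_None] by (rule sum.cong) (auto simp: card_None filters_def)
  finally show ?thesis .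
qed

lemma leK_Some_Some [simp]: "leK P le a b (Some z) (Some y) = le z y"
  by (simp add: leK_def)

lemma leK_empty_None_Some [simp]: "leK P le a {} None (Some y) = False"
  by (simp add: leK_def S1_def)

lemma leK_carrier_Some_None [simp]: "leK P le P b (Some z) None = False"
  by (simp add: leK_def S0_def)

lemma leK_empty_Some_None:
  assumes po: "finite_poset P le" and a: "a \<in> filters P le" and "z \<in> P"
  shows "leK P le a {} (Some z) None \<longleftrightarrow> z \<notin> a"
proof
  assume "leK P le a {} (Some z) None"
  then obtain s where "s \<in> S0 P le a" "le z s" by (auto simp: leK_def)
  then show "z \<notin> a" using a by (auto simp: filters_def S0_def)
next
  assume "z \<notin> a"
  then obtain s where "s \<in> P - a" "le z s" "\<forall>t\<in>P - a. le s t \<longrightarrow> t = s"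
    using finite_poset_ex_maximal_above[OF po, of "P - a" z] \<open>z \<in> P\<close> by auto
  then show "leK P le a {} (Some z) None" using \<open>z \<notin> a\<close> by (auto simp: leK_def S0_def)
qed

lemma leK_carrier_None_Some:
  assumes po: "finite_poset P le" and b: "b \<in> filters P le" and "y \<in> P"
  shows "leK P le P b None (Some y) \<longleftrightarrow> y \<in> b"
proof
  assume "leK P le P b None (Some y)"
  then show "y \<in> b" using \<open>y \<in> P\<close> by (auto simp: leK_def)
next
  assume "y \<in> b"
  moreover have "b \<subseteq> P" using b by (simp add: filters_def)
  ultimately obtain s where "s \<in> b" "le s y" "\<forall>t\<in>b. le t s \<longrightarrow> t = s"
    using finite_poset_ex_minimal_below[OF po] by blast
  then show "leK P le P b None (Some y)" using \<open>y \<in> b\<close> by (auto simp: leK_def S1_def)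
qed

lemma rank_gen_convex_expansion_top:
  assumes po: "finite_poset P le" and a: "a \<in> filters P le"
  shows "rank_gen (convex_expansion P le a {}) rev_incl
    = rank_gen (filters P le) rev_incl
      + monom 1 (height (filters P le) rev_incl a + 1) * rank_gen (interval P le a {}) rev_incl"
proof -
  have "finite P" and "a \<subseteq> P" using finite_posetD(1)[OF po] a by (auto simp: filters_def)
  define f where "f = case_option (card P + 1) (down_card P le)"
  have rank: "strict_rank (PK P) (leK P le a {}) f"
    using strict_rank_down_card[OF po] down_card_le_card[OF \<open>finite P\<close>]
    by (fastforce simp: strict_rank_def PK_def f_def less_Suc_eq_le)
  have "(\<forall>z\<in>G. \<not> leK P le a {} (Some z) None) \<longleftrightarrow> G \<subseteq> a" if "G \<subseteq> P" for G
    using that leK_empty_Some_None[OF po a] by blast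
  then have X: "{G \<in> filters P le. \<forall>z\<in>G. \<not> leK P le a {} (Some z) None} = interval P le a {}"
    by (auto simp: interval_eq filters_def)
  have "rank_gen (convex_expansion P le a {}) rev_incl
      = (\<Sum>G\<in>interval P le a {}. monom 1 (card (P - G) + 1)) + rank_gen (filters P le) rev_incl"
    unfolding convex_expansion_def rank_gen_filters_PK[OF \<open>finite P\<close> rank leK_Some_Some] X
    by (simp add: rank_gen_filters[OF po])
  also have "(\<Sum>G\<in>interval P le a {}. monom 1 (card (P - G) + 1))
      = (\<Sum>G\<in>interval P le a {}. monom 1 (card (P - a) + 1) * monom (1 :: int) (card (a - G)))"
  proof (rule sum.cong)
    fix G assume "G \<in> interval P le a {}"
    then have "G \<subseteq> a" by (simp add: interval_eq)
    then have "card (P - G) = card (P - a) + card (a - G)"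
      using card_Diff_nested \<open>finite P\<close> \<open>a \<subseteq> P\<close> by blast
    then show "monom 1 (card (P - G) + 1) = monom 1 (card (P - a) + 1) * monom (1 :: int) (card (a - G))"
      by (simp add: mult_monom)
  qed simp
  also have "\<dots> = monom 1 (height (filters P le) rev_incl a + 1) * rank_gen (interval P le a {}) rev_incl"
    using height_filters[OF \<open>finite P\<close> strict_rank_down_card[OF po] a]
    by (simp add: rank_gen_interval[OF po a] sum_distrib_left)
  finally show ?thesis by (simp add: add.commute)
qed

lemma rank_gen_convex_expansion_bottom:
  assumes po: "finite_poset P le" and b: "b \<in> filters P le"
  shows "rank_gen (convex_expansion P le P b) rev_incl
    = rank_gen (interval P le P b) rev_incl + monom 1 1 * rank_gen (filters P le) rev_incl"
proof -
  have "finite P" using finite_posetD(1)[OF po] .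
  define f where "f = case_option 0 (\<lambda>z. down_card P le z + 1)"
  have rank: "strict_rank (PK P) (leK P le P b) f"
    using strict_rank_down_card[OF po] by (fastforce simp: strict_rank_def PK_def f_def)
  have "(\<forall>y\<in>P. leK P le P b None (Some y) \<longrightarrow> y \<in> G) \<longleftrightarrow> b \<subseteq> G" for G
    using leK_carrier_None_Some[OF po b] b by (auto simp: filters_def)
  then have Y: "{G \<in> filters P le. \<forall>y\<in>P. leK P le P b None (Some y) \<longrightarrow> y \<in> G} = interval P le P b"
    by (auto simp: interval_eq filters_def)
  have "rank_gen (convex_expansion P le P b) rev_incl
      = (\<Sum>G\<in>filters P le. monom 1 (card (P - G) + 1)) + (\<Sum>G\<in>interval P le P b. monom 1 (card (P - G)))"
    unfolding convex_expansion_def rank_gen_filters_PK[OF \<open>finite P\<close> rank leK_Some_Some] Y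
    by simp
  also have "(\<Sum>G\<in>filters P le. monom 1 (card (P - G) + 1)) = monom 1 1 * rank_gen (filters P le) rev_incl"
    by (simp add: rank_gen_filters[OF po] sum_distrib_left mult_monom)
  also have "(\<Sum>G\<in>interval P le P b. monom 1 (card (P - G))) = rank_gen (interval P le P b) rev_incl"
    using rank_gen_interval[OF po, of P b] by (simp add: filters_def)
  finally show ?thesis by (simp add: add.commute)
qed

theorem corollary5:
  fixes P :: "'a set" and le :: "'a \<Rightarrow> 'a \<Rightarrow> bool" and a b :: "'a set"
  assumes "finite_poset P le"
    and "is_cutting P le a b"
  shows "(b = {} \<longrightarrow>
            rank_gen (convex_expansion P le a b) rev_incl
              = rank_gen (filters P le) rev_incl
                + monom 1 (height (filters P le) rev_incl a + 1) * rank_gen (interval P le a b) rev_incl)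
       \<and> (a = P \<longrightarrow>
            rank_gen (convex_expansion P le a b) rev_incl
              = rank_gen (interval P le a b) rev_incl
                + monom 1 1 * rank_gen (filters P le) rev_incl)"
proof -
  \<comment> \<open>In both cases K contains an end of L, so every maximal chain meets K anyway.\<close>
  have "a \<in> filters P le" and "b \<in> filters P le"
    using assms(2) by (simp_all add: is_cutting_def)
  then show ?thesis
    using rank_gen_convex_expansion_top[OF assms(1)] rank_gen_convex_expansion_bottom[OF assms(1)]
    by auto
qed

end
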